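(* For $p=1$, the eigenvalues of the boundary-cell operator $M^{-1}(K^s-K^R+K^{SB})$ are $$\lambda_{\pm}(d)=3d-2\pm\sqrt{9d^2-12d-2},$$ while those of the interior-cell operator $M^{-1}(K^s-K^R)$ are $-2\pm\sqrt{2}\,i$. Moreover, for $d\in[-1,1]$, both $\lambda_+(d)$ and $\lambda_-(d)$ have strictly negative real part if and only if $d<2/3$.
   Context: Setting: the linear advection equation $\partial_t u+\partial_x u=s(x)$ (velocity $1$) with a Dirichlet condition $u=u_D$ at the left physical boundary $\bar x$. Uniform mesh of cells $\Omega_e=[x_{e-1/2},x_{e+1/2}]$, $e=1,\dots,N$, with $x_{1/2}=0$ and cell size $\Delta x=1$. On each cell the approximation space is $\mathbb{P}^p(\Omega_e)$ with basis $\{\phi^e_j\}_{j=0}^p$, where $\phi^e_j(x)=\phi_j(x-(e-1))$ are translates of a fixed basis $\{\phi_j\}$ of $\mathbb{P}^p$ on $[0,1]$. Local matrices (indices $i,j=0,\dots,p$, identical for all cells by translation): mass $M_{ij}=\int_{\Omega_e}\phi^e_i\phi^e_j\,dx$; stiffness $K^s_{ij}=\int_{\Omega_e}\partial_x\phi^e_i\,\phi^e_j\,dx$; right interface $K^R_{ij}=\phi^e_i(x_{e+1/2})\phi^e_j(x_{e+1/2})$. The physical boundary is at $\bar x = x_{1/2}+d$, with $d\in[-1,1]$ ($d<0$: outside the first cell, $d>0$: inside). Shifted boundary polynomial correction with homogeneous data $u_D=0$: the upwind flux at $x_{1/2}$ is $u^\star=-\bigl(u_h(x_{1/2}+d)-u_h(x_{1/2})\bigr)$,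 with $u_h$ the (polynomially extended) solution of cell 1, giving the matrix $K^{SB}_{ij}=-\phi^1_i(x_{1/2})\bigl(\phi^1_j(x_{1/2}+d)-\phi^1_j(x_{1/2})\bigr)$. The square root denotes any complex square root (the pair $\lambda_\pm$ is independent of the choice). *)

theory Defs
  imports "HOL-Analysis.Analysis" "HOL-Computational_Algebra.Polynomial"
begin

text \<open>Degree p = 1. Cell 1 is [0,1] (x_{1/2} = 0, Delta x = 1); by translation all local
  matrices coincide with those of cell 1, whose basis is phi_j itself.\<close>

definition is_P1_basis :: "(2 \<Rightarrow> real poly) \<Rightarrow> bool" where
  "is_P1_basis \<phi> \<longleftrightarrow>
     (\<forall>i. degree (\<phi> i) \<le> 1) \<and>
     (\<forall>c::2 \<Rightarrow> real. (\<Sum>i\<in>UNIV. smult (c i) (\<phi> i)) = 0 \<longrightarrow> (\<forall>i. c i = 0)) \<and>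
     (\<forall>q::real poly. degree q \<le> 1 \<longrightarrow> (\<exists>c::2 \<Rightarrow> real. q = (\<Sum>i\<in>UNIV. smult (c i) (\<phi> i))))"

definition mass_mat :: "(2 \<Rightarrow> real poly) \<Rightarrow> real^2^2" where
  "mass_mat \<phi> = (\<chi> i j. integral {0..1} (\<lambda>x. poly (\<phi> i) x * poly (\<phi> j) x))"

definition stiff_mat :: "(2 \<Rightarrow> real poly) \<Rightarrow> real^2^2" where
  "stiff_mat \<phi> = (\<chi> i j. integral {0..1} (\<lambda>x. poly (pderiv (\<phi> i)) x * poly (\<phi> j) x))"

definition right_mat :: "(2 \<Rightarrow> real poly) \<Rightarrow> real^2^2" where
  "right_mat \<phi> = (\<chi> i j. poly (\<phi> i) 1 * poly (\<phi> j) 1)"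

definition sb_mat :: "(2 \<Rightarrow> real poly) \<Rightarrow> real \<Rightarrow> real^2^2" where
  "sb_mat \<phi> d = (\<chi> i j. - poly (\<phi> i) 0 * (poly (\<phi> j) d - poly (\<phi> j) 0))"

definition complex_eigenvalues :: "real^'n^'n \<Rightarrow> complex set" where
  "complex_eigenvalues A = {z. det (mat z - (\<chi> i j. complex_of_real (A $ i $ j))) = 0}"

definition lam_plus :: "real \<Rightarrow> complex" where
  "lam_plus d = complex_of_real (3*d - 2) + csqrt (complex_of_real (9*d^2 - 12*d - 2))"

definition lam_minus :: "real \<Rightarrow> complex" where
  "lam_minus d = complex_of_real (3*d - 2) - csqrt (complex_of_real (9*d^2 - 12*d - 2))"

end

theory Submission
  imports Defs
begin

text \<open>Write the basis as \<open>\<phi>\<^sub>i = a\<^sub>i + b\<^sub>i x\<close>. The eigenvalues of \<open>M\<^sup>-\<^sup>1 A\<close> are the roots of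
  \<open>det (z M - A)\<close>, and for every basis one computes
  \<open>det (z M - A) = det M \<cdot> (z\<^sup>2 - (6d - 4) z + 6)\<close> with \<open>det M = (a\<^sub>1 b\<^sub>2 - a\<^sub>2 b\<^sub>1)\<^sup>2 / 12 \<noteq> 0\<close>,
  whose roots are \<open>\<lambda>\<^sub>\<plusminus>(d)\<close>. The interior operator is the case \<open>d = 0\<close>, where \<open>K\<^sup>S\<^sup>B\<close> vanishes.
  For stability: if \<open>9d\<^sup>2 - 12d - 2 < 0\<close> both real parts equal \<open>3d - 2\<close>; otherwise \<open>d < 0\<close> on
  \<open>[-1, 1]\<close> and the real square root is smaller than \<open>2 - 3d\<close>.\<close>

lemma integral_quadratic_unit_interval:
  "integral {0..1} (\<lambda>x::real. A + B*x + C*x^2) = A + B/2 + C/3"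
proof -
  have "((\<lambda>x::real. A + B*x + C*x^2) has_integral
        ((\<lambda>x. A*x + B*x^2/2 + C*x^3/3) 1 - (\<lambda>x. A*x + B*x^2/2 + C*x^3/3) 0)) {0..1}"
    by (rule fundamental_theorem_of_calculus)
       (auto simp flip: has_real_derivative_iff_has_vector_derivative
             intro!: derivative_eq_intros simp: algebra_simps power2_eq_square)
  then show ?thesis by (simp add: integral_unique)
qed

lemma degree_le_1_poly_eq: "degree p \<le> 1 \<Longrightarrow> p = [:coeff p 0, coeff p 1:]"
  by (rule poly_eqI) (auto simp: coeff_pCons split: nat.split intro: coeff_eq_0)

definition of_real_matrix :: "real^'n^'m \<Rightarrow> complex^'n^'m" where
  "of_real_matrix A = (\<chi> i j. complex_of_real (A $ i $ j))"

lemma of_real_matrix_mult: "of_real_matrix (A ** B) = of_real_matrix A ** of_real_matrix B"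
  by (simp add: of_real_matrix_def matrix_matrix_mult_def vec_eq_iff)

lemma of_real_matrix_mat_1 [simp]: "of_real_matrix (mat 1) = mat 1"
  by (simp add: of_real_matrix_def mat_def vec_eq_iff)

lemma matrix_mul_mat_commute: "mat z ** A = (A::'a::comm_ring_1^'n^'n) ** mat z"
  by (simp add: vec_eq_iff matrix_matrix_mult_def mat_def if_distrib if_distribR mult.commute
           cong: if_cong)

lemma matrix_diff_ldistrib: "(A::'a::comm_ring_1^'n^'m) ** (B - C) = A ** B - A ** C"
  by (simp add: vec_eq_iff matrix_matrix_mult_def algebra_simps sum_subtractf)

lemma matrix_inv_left: "invertible A \<Longrightarrow> matrix_inv A ** A = mat 1"
  unfolding invertible_def matrix_inv_def by (rule someI2_ex) auto

lemma complex_eigenvalues_matrix_inv_mult: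
  fixes M A :: "real^'n^'n"
  assumes "det M \<noteq> 0"
  shows "complex_eigenvalues (matrix_inv M ** A)
           = {z. det (mat z ** of_real_matrix M - of_real_matrix A) = 0}"
proof -
  let ?N = "of_real_matrix (matrix_inv M)"
  have N_left_inverse: "?N ** of_real_matrix M = mat 1"
    using matrix_inv_left[of M] assms
    by (simp add: invertible_det_nz flip: of_real_matrix_mult)
  then have "det ?N * det (of_real_matrix M) = 1"
    by (metis det_I det_mul)
  then have det_N: "det ?N \<noteq> 0" by auto
  have "?N ** (mat z ** of_real_matrix M) = mat z" for z
    by (simp add: matrix_mul_mat_commute matrix_mul_assoc N_left_inverse)
  then have "mat z - of_real_matrix (matrix_inv M ** A)
               = ?N ** (mat z ** of_real_matrix M - of_real_matrix A)" for z
    by (simp add: matrix_diff_ldistrib of_real_matrix_mult)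
  then show ?thesis
    using det_N by (simp add: complex_eigenvalues_def det_mul flip: of_real_matrix_def)
qed

lemma det_pencil_2:
  fixes M A :: "real^2^2"
  shows "det (mat z ** of_real_matrix M - of_real_matrix A)
           = of_real (det M) * z^2
             - of_real (M$1$1 * A$2$2 + M$2$2 * A$1$1 - M$1$2 * A$2$1 - M$2$1 * A$1$2) * z
             + of_real (det A)"
  by (simp add: det_2 of_real_matrix_def matrix_matrix_mult_def mat_def sum_2 algebra_simps
                power2_eq_square)

lemma is_P1_basis_linear:
  assumes "is_P1_basis \<phi>"
  shows "\<phi> i = [:coeff (\<phi> i) 0, coeff (\<phi> i) 1:]"
  using assms degree_le_1_poly_eq unfolding is_P1_basis_def by blast

lemma is_P1_basis_coeff_det_nonzero:
  assumes basis: "is_P1_basis \<phi>" and linear: "\<And>i. \<phi> i = [:a i, b i:]"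
  shows "a 1 * b 2 - a 2 * b 1 \<noteq> 0"
proof -
  have span: "\<exists>c. q = (\<Sum>i\<in>UNIV. smult (c i) (\<phi> i))" if "degree q \<le> 1" for q
    using basis that unfolding is_P1_basis_def by blast
  obtain c where c: "[:1:] = (\<Sum>i\<in>UNIV. smult (c i) (\<phi> i))" using span[of "[:1:]"] by auto
  obtain e where e: "[:0, 1:] = (\<Sum>i\<in>UNIV. smult (e i) (\<phi> i))" using span[of "[:0, 1:]"] by auto
  have "c 1 * a 1 + c 2 * a 2 = 1" "c 1 * b 1 + c 2 * b 2 = 0"
       "e 1 * a 1 + e 2 * a 2 = 0" "e 1 * b 1 + e 2 * b 2 = 1"
    using arg_cong[OF c, of "\<lambda>p. coeff p 0"] arg_cong[OF c, of "\<lambda>p. coeff p 1"]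
          arg_cong[OF e, of "\<lambda>p. coeff p 0"] arg_cong[OF e, of "\<lambda>p. coeff p 1"]
    by (simp_all add: sum_2 linear)
  then have "(c 1 * e 2 - c 2 * e 1) * (a 1 * b 2 - a 2 * b 1) = 1" by algebra
  then show ?thesis by auto
qed

context
  fixes \<phi> :: "2 \<Rightarrow> real poly" and a b :: "2 \<Rightarrow> real"
  assumes linear: "\<And>i. \<phi> i = [:a i, b i:]"
begin

lemma mass_mat_linear: "mass_mat \<phi> $ i $ j = a i * a j + (a i * b j + a j * b i) / 2 + b i * b j / 3"
proof -
  have "(\<lambda>x. poly (\<phi> i) x * poly (\<phi> j) x)
          = (\<lambda>x. a i * a j + (a i * b j + a j * b i) * x + b i * b j * x^2)"
    by (auto simp: linear algebra_simps power2_eq_square)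
  then show ?thesis unfolding mass_mat_def by (simp add: integral_quadratic_unit_interval)
qed

lemma stiff_mat_linear: "stiff_mat \<phi> $ i $ j = b i * a j + b i * b j / 2"
proof -
  have "(\<lambda>x. poly (pderiv (\<phi> i)) x * poly (\<phi> j) x) = (\<lambda>x. b i * a j + b i * b j * x + 0 * x^2)"
    by (auto simp: linear algebra_simps pderiv_pCons)
  then show ?thesis
    unfolding stiff_mat_def using integral_quadratic_unit_interval[of "b i * a j" "b i * b j" 0]
    by simp
qed

lemma right_mat_linear: "right_mat \<phi> $ i $ j = (a i + b i) * (a j + b j)"
  by (simp add: right_mat_def linear)

lemma sb_mat_linear: "sb_mat \<phi> d $ i $ j = - a i * b j * d"
  by (simp add: sb_mat_def linear)

lemma det_mass_mat_linear: "det (mass_mat \<phi>) = (a 1 * b 2 - a 2 * b 1)^2 / 12"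
  by (simp add: det_2 mass_mat_linear field_simps power2_eq_square)

lemma det_pencil_P1:
  "det (mat z ** of_real_matrix (mass_mat \<phi>)
          - of_real_matrix (stiff_mat \<phi> - right_mat \<phi> + sb_mat \<phi> d))
     = of_real (det (mass_mat \<phi>)) * (z^2 - of_real (6*d - 4) * z + 6)"
proof -
  let ?M = "mass_mat \<phi>" and ?A = "stiff_mat \<phi> - right_mat \<phi> + sb_mat \<phi> d"
  have A: "?A $ i $ j = b i * a j + b i * b j / 2 - (a i + b i) * (a j + b j) - a i * b j * d" for i j
    by (simp add: stiff_mat_linear right_mat_linear sb_mat_linear)
  have mixed: "?M$1$1 * ?A$2$2 + ?M$2$2 * ?A$1$1 - ?M$1$2 * ?A$2$1 - ?M$2$1 * ?A$1$2
                 = (6*d - 4) * det ?M"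
    unfolding det_mass_mat_linear A mass_mat_linear
    by (simp add: field_simps power2_eq_square)
  have det_A: "det ?A = 6 * det ?M"
    unfolding det_mass_mat_linear unfolding det_2 A by (simp add: field_simps power2_eq_square)
  show ?thesis
    unfolding det_pencil_2 mixed det_A by (simp add: algebra_simps)
qed

end

lemma csqrt_quadratic_factor:
  "(z - (c + csqrt w)) * (z - (c - csqrt w)) = z^2 - 2 * c * z + (c^2 - w)"
proof -
  have "(z - (c + csqrt w)) * (z - (c - csqrt w)) = z^2 - 2 * c * z + (c^2 - (csqrt w)^2)"
    by algebra
  then show ?thesis by simp
qed

lemma lam_plus_minus_factor:
  "z^2 - of_real (6*d - 4) * z + 6 = (z - lam_plus d) * (z - lam_minus d)"
  unfolding lam_plus_def lam_minus_def csqrt_quadratic_factor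
  by (simp add: algebra_simps power2_eq_square)

lemma lam_plus_0: "lam_plus 0 = -2 + complex_of_real (sqrt 2) * \<i>"
  and lam_minus_0: "lam_minus 0 = -2 - complex_of_real (sqrt 2) * \<i>"
  by (simp_all add: lam_plus_def lam_minus_def csqrt_of_real' mult.commute)

lemma Re_lam_plus_minus_neg_iff:
  assumes "d \<in> {-1..1::real}"
  shows "(Re (lam_plus d) < 0 \<and> Re (lam_minus d) < 0) \<longleftrightarrow> d < 2/3"
proof (cases "9*d^2 - 12*d - 2 \<ge> 0")
  case True
  define D where "D = 9*d^2 - 12*d - 2"
  have "d < 0"
  proof (rule ccontr)
    assume "\<not> d < 0"
    then have "3*d*(3*d - 4) \<le> 0" using assms by (intro mult_nonneg_nonpos) auto
    then show False using True by (simp add: power2_eq_square algebra_simps)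
  qed
  have "D < (2 - 3*d)^2" by (simp add: D_def power2_eq_square algebra_simps)
  then have "sqrt D < 2 - 3*d"
    using real_sqrt_less_mono \<open>d < 0\<close> by fastforce
  moreover have "Re (lam_plus d) = 3*d - 2 + sqrt D" "Re (lam_minus d) = 3*d - 2 - sqrt D"
    using True by (simp_all add: lam_plus_def lam_minus_def D_def csqrt_of_real)
  moreover have "sqrt D \<ge> 0" using True D_def by simp
  ultimately have "Re (lam_plus d) < 0" "Re (lam_minus d) < 0" by linarith+
  then show ?thesis using \<open>d < 0\<close> by simp
next
  case False
  then have "Re (csqrt (complex_of_real (9*d^2 - 12*d - 2))) = 0"
    by (simp add: csqrt_of_real')
  then show ?thesis unfolding lam_plus_def lam_minus_def by auto
qed

lemma complex_eigenvalues_P1_boundary_cell: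
  assumes "is_P1_basis \<phi>"
  shows "complex_eigenvalues (matrix_inv (mass_mat \<phi>) ** (stiff_mat \<phi> - right_mat \<phi> + sb_mat \<phi> d))
           = {lam_plus d, lam_minus d}"
proof -
  define a where "a i = coeff (\<phi> i) 0" for i
  define b where "b i = coeff (\<phi> i) 1" for i
  have linear: "\<phi> i = [:a i, b i:]" for i
    unfolding a_def b_def using is_P1_basis_linear[OF assms] .
  have det_mass: "det (mass_mat \<phi>) \<noteq> 0"
    unfolding det_mass_mat_linear[of \<phi> a b, OF linear]
    using is_P1_basis_coeff_det_nonzero[OF assms linear] by simp
  show ?thesis
    unfolding complex_eigenvalues_matrix_inv_mult[OF det_mass]
      det_pencil_P1[of \<phi> a b, OF linear] lam_plus_minus_factor
    using det_mass by auto
qed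

theorem mainTheorem3:
  fixes \<phi> :: "2 \<Rightarrow> real poly" and d :: real
  assumes "is_P1_basis \<phi>" and "d \<in> {-1..1}"
  shows "complex_eigenvalues (matrix_inv (mass_mat \<phi>) ** (stiff_mat \<phi> - right_mat \<phi> + sb_mat \<phi> d))
           = {lam_plus d, lam_minus d}
       \<and> complex_eigenvalues (matrix_inv (mass_mat \<phi>) ** (stiff_mat \<phi> - right_mat \<phi>))
           = {-2 + complex_of_real (sqrt 2) * \<i>, -2 - complex_of_real (sqrt 2) * \<i>}
       \<and> ((Re (lam_plus d) < 0 \<and> Re (lam_minus d) < 0) \<longleftrightarrow> d < 2/3)"
proof -
  have "sb_mat \<phi> 0 = 0" by (simp add: sb_mat_def vec_eq_iff)
  then have "complex_eigenvalues (matrix_inv (mass_mat \<phi>) ** (stiff_mat \<phi> - right_mat \<phi>))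
               = {lam_plus 0, lam_minus 0}"
    using complex_eigenvalues_P1_boundary_cell[OF assms(1), of 0] by simp
  then show ?thesis
    using complex_eigenvalues_P1_boundary_cell[OF assms(1)] Re_lam_plus_minus_neg_iff[OF assms(2)]
    by (simp add: lam_plus_0 lam_minus_0)
qed

end
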